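(* Let $X$ be a Banach space, $F$ a Banach lattice and $T: X \to F$ a bounded linear operator. The following are equivalent: (1) $T$ is an almost Grothendieck operator; (2) $S \circ T: X \to c_0$ is weakly compact for every disjoint operator $S: F \to c_0$; (3) $T(A)$ is an almost Grothendieck set in $F$ for every bounded set $A \subset X$; (4) $T(B_X)$ is an almost Grothendieck set in $F$.
   Context: $B_X$ is the closed unit ball of $X$. Every bounded linear operator $S: F \to c_0$ has the form $S(y) = (y_n'(y))_n$ for a unique weak* null sequence $(y_n') \subset F'$; $S$ is a disjoint operator if $(y_n')$ is disjoint in the dual Banach lattice $F'$. A subset $A \subset F$ is almost Grothendieck if $S(A)$ is relatively weakly compact in $c_0$ for every disjoint operator $S: F \to c_0$. A bounded operator $T: X \to F$ is almost Grothendieck if $T'y_n' \to 0$ weakly in $X'$ for every disjoint weak* null sequence $(y_n') \subset F'$. *)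

theory Defs
  imports "HOL-Analysis.Analysis"
begin

class banach_lattice = banach + lattice +
  assumes bl_add_mono: "x \<le> y \<Longrightarrow> x + z \<le> y + z"
    and bl_scale_mono: "x \<le> y \<Longrightarrow> 0 \<le> a \<Longrightarrow> a *\<^sub>R x \<le> a *\<^sub>R y"
    and bl_norm_mono: "sup x (- x) \<le> sup y (- y) \<Longrightarrow> norm x \<le> norm y"

definition labs :: "'b::banach_lattice \<Rightarrow> 'b" where
  "labs x = sup x (- x)"

text \<open>Modulus of a functional f in F' evaluated at a positive element u
(Riesz--Kantorovich): |f|(u) = sup { |f z| : |z| <= u }.\<close>
definition dual_abs :: "('b::banach_lattice \<Rightarrow>\<^sub>L real) \<Rightarrow> 'b \<Rightarrow> real" where
  "dual_abs f u = Sup {\<bar>blinfun_apply f z\<bar> | z. labs z \<le> u}"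

text \<open>f, g in F' are disjoint iff |f| inf |g| = 0, where (Riesz--Kantorovich)
(|f| inf |g|)(y) = inf { |f|(u) + |g|(y - u) : 0 <= u <= y } for y >= 0.\<close>
definition dual_disjoint :: "('b::banach_lattice \<Rightarrow>\<^sub>L real) \<Rightarrow> ('b \<Rightarrow>\<^sub>L real) \<Rightarrow> bool" where
  "dual_disjoint f g \<longleftrightarrow>
     (\<forall>y. 0 \<le> y \<longrightarrow> Inf {dual_abs f u + dual_abs g (y - u) | u. 0 \<le> u \<and> u \<le> y} = 0)"

definition disjoint_seq :: "(nat \<Rightarrow> ('b::banach_lattice \<Rightarrow>\<^sub>L real)) \<Rightarrow> bool" where
  "disjoint_seq ys \<longleftrightarrow> (\<forall>n m. n \<noteq> m \<longrightarrow> dual_disjoint (ys n) (ys m))"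

definition weak_star_null :: "(nat \<Rightarrow> ('b::real_normed_vector \<Rightarrow>\<^sub>L real)) \<Rightarrow> bool" where
  "weak_star_null ys \<longleftrightarrow> (\<forall>v. (\<lambda>n. blinfun_apply (ys n) v) \<longlonglongrightarrow> 0)"

definition weakly_null_dual :: "(nat \<Rightarrow> ('a::real_normed_vector \<Rightarrow>\<^sub>L real)) \<Rightarrow> bool" where
  "weakly_null_dual xs \<longleftrightarrow>
     (\<forall>\<phi> :: ('a \<Rightarrow>\<^sub>L real) \<Rightarrow>\<^sub>L real. (\<lambda>n. blinfun_apply \<phi> (xs n)) \<longlonglongrightarrow> 0)"

text \<open>c_0 as the closed subspace of l^infinity = (nat \<Rightarrow>C real) (sup norm) of null sequences.\<close>
definition c0 :: "(nat \<Rightarrow>\<^sub>C real) set" where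
  "c0 = {g. (\<lambda>n. apply_bcontfun g n) \<longlonglongrightarrow> 0}"

definition dual_on :: "'v::real_normed_vector set \<Rightarrow> ('v \<Rightarrow> real) set" where
  "dual_on M = {f. (\<forall>x\<in>M. \<forall>y\<in>M. f (x + y) = f x + f y)
                  \<and> (\<forall>x\<in>M. \<forall>c. f (c *\<^sub>R x) = c * f x)
                  \<and> (\<exists>C. \<forall>x\<in>M. \<bar>f x\<bar> \<le> C * norm x)}"

definition weak_topology_on :: "'v::real_normed_vector set \<Rightarrow> 'v topology" where
  "weak_topology_on M =
     topology_generated_by {{x \<in> M. f x \<in> U} | f U. f \<in> dual_on M \<and> open U}"

definition rel_weakly_compact :: "'v::real_normed_vector set \<Rightarrow> 'v set \<Rightarrow> bool" where
  "rel_weakly_compact M A \<longleftrightarrow>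
     compactin (weak_topology_on M) ((weak_topology_on M) closure_of A)"

text \<open>The operator S : F -> c_0, S(y) = (y_n'(y))_n, given by a weak* null sequence.\<close>
definition seq_op :: "(nat \<Rightarrow> ('b::real_normed_vector \<Rightarrow>\<^sub>L real)) \<Rightarrow> 'b \<Rightarrow> (nat \<Rightarrow>\<^sub>C real)" where
  "seq_op ys v = Bcontfun (\<lambda>n. blinfun_apply (ys n) v)"

text \<open>S is a disjoint operator iff its weak* null sequence is disjoint in F'.\<close>
definition disjoint_operator_seq :: "(nat \<Rightarrow> ('b::banach_lattice \<Rightarrow>\<^sub>L real)) \<Rightarrow> bool" where
  "disjoint_operator_seq ys \<longleftrightarrow> weak_star_null ys \<and> disjoint_seq ys"

definition almost_grothendieck_set :: "'b::banach_lattice set \<Rightarrow> bool" where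
  "almost_grothendieck_set A \<longleftrightarrow>
     (\<forall>ys. disjoint_operator_seq ys \<longrightarrow> rel_weakly_compact c0 (seq_op ys ` A))"

definition almost_grothendieck_op :: "('a::banach \<Rightarrow>\<^sub>L 'b::banach_lattice) \<Rightarrow> bool" where
  "almost_grothendieck_op T \<longleftrightarrow>
     (\<forall>ys. weak_star_null ys \<and> disjoint_seq ys \<longrightarrow> weakly_null_dual (\<lambda>n. ys n o\<^sub>L T))"

definition weakly_compact_op_c0 :: "('a::real_normed_vector \<Rightarrow> (nat \<Rightarrow>\<^sub>C real)) \<Rightarrow> bool" where
  "weakly_compact_op_c0 R \<longleftrightarrow> rel_weakly_compact c0 (R ` cball 0 1)"

end

theory Submission
  imports Defs
begin

(*
  If (z_n) is weakly null, R extends to the weak* compact balls of X'' by psi |-> (psi z_n)_n.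
  Since c_0' = l_1, a functional sum_n a_n e_n' of c_0 pulls back to evaluation at the convergent
  series sum_n a_n z_n (the z_n are bounded by uniform boundedness), so the extension is
  weak*-to-weak continuous and R(A) lies in a weakly compact set.

  Conversely, by Helly's lemma every psi in the unit ball of X'' is approximated on z_0, ..., z_(N-1)
  by some x_N in the unit ball of X. A weak cluster point of the R x_N has coordinates psi z_n,
  so (psi z_n)_n lies in c_0.
*)

section \<open>The sequence space c0 and its weak topology\<close>

lemma apply_Bcontfun_null_seq:
  fixes f :: "nat \<Rightarrow> real"
  assumes "f \<longlonglongrightarrow> 0"
  shows "apply_bcontfun (Bcontfun f) = f"
proof -
  obtain K where "\<And>n. norm (f n) \<le> K"
    using convergent_imp_Bseq[OF convergentI[OF assms]] by (auto simp: Bseq_def)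
  then have "f \<in> bcontfun"
    by (intro bcontfun_normI) (auto intro: continuous_on_discrete)
  then show ?thesis by (simp add: Bcontfun_inverse)
qed

lemma Bcontfun_in_c0: "f \<longlonglongrightarrow> 0 \<Longrightarrow> Bcontfun f \<in> c0"
  by (simp add: c0_def apply_Bcontfun_null_seq)

lemma c0_diff: "x \<in> c0 \<Longrightarrow> y \<in> c0 \<Longrightarrow> x - y \<in> c0"
  by (auto simp: c0_def dest: tendsto_diff)

lemma c0_scaleR: "x \<in> c0 \<Longrightarrow> c *\<^sub>R x \<in> c0"
  by (auto simp: c0_def dest: tendsto_mult_right_zero)

lemma zero_in_c0: "0 \<in> c0"
  by (simp add: c0_def)

lemma seq_op_in_c0: "weak_star_null z \<Longrightarrow> seq_op z x \<in> c0"
  by (simp add: weak_star_null_def seq_op_def Bcontfun_in_c0)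

lemma apply_seq_op: "weak_star_null z \<Longrightarrow> apply_bcontfun (seq_op z x) = (\<lambda>n. z n x)"
  by (simp add: weak_star_null_def seq_op_def apply_Bcontfun_null_seq)

lemma topspace_weak_topology_on [simp]: "topspace (weak_topology_on M) = M"
proof -
  have "(\<lambda>_. 0) \<in> dual_on M" by (auto simp: dual_on_def intro: exI[of _ 0])
  then have "M \<in> {{x \<in> M. f x \<in> U} | f U. f \<in> dual_on M \<and> open U}"
    by (intro CollectI exI[of _ "\<lambda>_. 0"] exI[of _ UNIV]) auto
  then show ?thesis
    unfolding weak_topology_on_def topology_generated_by_topspace by blast
qed

lemma continuous_map_weak_topology_on:
  assumes "f \<in> dual_on M"
  shows "continuous_map (weak_topology_on M) euclideanreal f"
  unfolding continuous_map
proof (intro conjI allI impI)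
  fix U assume "openin euclideanreal U"
  then have "{x \<in> M. f x \<in> U} \<in> {{x \<in> M. f x \<in> U} | f U. f \<in> dual_on M \<and> open U}"
    using assms by auto
  then show "openin (weak_topology_on M) {x \<in> topspace (weak_topology_on M). f x \<in> U}"
    unfolding topspace_weak_topology_on unfolding weak_topology_on_def
    by (rule topology_generated_by_Basis)
qed simp

lemma continuous_map_into_weak_topology_on:
  assumes "g \<in> topspace Y \<rightarrow> M"
    and "\<And>f. f \<in> dual_on M \<Longrightarrow> continuous_map Y euclideanreal (f \<circ> g)"
  shows "continuous_map Y (weak_topology_on M) g"
  unfolding weak_topology_on_def
proof (rule continuous_on_generated_topo)
  show "g ` topspace Y \<subseteq> \<Union>{{x \<in> M. f x \<in> U} | f U. f \<in> dual_on M \<and> open U}"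
    using assms(1) topspace_weak_topology_on[of M]
    unfolding weak_topology_on_def topology_generated_by_topspace by blast
next
  fix V assume "V \<in> {{x \<in> M. f x \<in> U} | f U. f \<in> dual_on M \<and> open U}"
  then obtain f U where V: "V = {x \<in> M. f x \<in> U}" and f: "f \<in> dual_on M" and "open U"
    by blast
  then have "openin Y {y \<in> topspace Y. (f \<circ> g) y \<in> U}"
    using openin_continuous_map_preimage[OF assms(2)[OF f], of U] \<open>open U\<close> by simp
  moreover have "g -` V \<inter> topspace Y = {y \<in> topspace Y. (f \<circ> g) y \<in> U}"
    using assms(1) by (auto simp: V)
  ultimately show "openin Y (g -` V \<inter> topspace Y)" by simp
qed

lemma coordinate_in_dual_on_c0: "(\<lambda>g. apply_bcontfun g n) \<in> dual_on c0"
proof -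
  have "\<bar>apply_bcontfun x n\<bar> \<le> 1 * norm x" for x :: "nat \<Rightarrow>\<^sub>C real"
    using norm_bounded[of x n] by simp
  then show ?thesis
    unfolding dual_on_def by (auto intro!: exI[of _ 1])
qed

lemma continuous_map_coordinate_c0:
  "continuous_map (weak_topology_on c0) euclideanreal (\<lambda>g. apply_bcontfun g n)"
  by (rule continuous_map_weak_topology_on[OF coordinate_in_dual_on_c0])

lemma Hausdorff_space_weak_topology_c0: "Hausdorff_space (weak_topology_on c0)"
  unfolding Hausdorff_space_def topspace_weak_topology_on
proof (intro allI impI, elim conjE)
  fix x y :: "nat \<Rightarrow>\<^sub>C real"
  assume "x \<in> c0" "y \<in> c0" "x \<noteq> y"
  then obtain n where n: "apply_bcontfun x n \<noteq> apply_bcontfun y n"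
    by (meson bcontfun_eqI)
  define d where "d = \<bar>apply_bcontfun x n - apply_bcontfun y n\<bar> / 2"
  have "d > 0" using n by (simp add: d_def)
  let ?U = "{g \<in> c0. apply_bcontfun g n \<in> ball (apply_bcontfun x n) d}"
  let ?V = "{g \<in> c0. apply_bcontfun g n \<in> ball (apply_bcontfun y n) d}"
  have "disjnt ?U ?V"
    unfolding disjnt_def by (auto simp: dist_real_def d_def) argo
  moreover have "openin (weak_topology_on c0) ?U" "openin (weak_topology_on c0) ?V"
    using openin_continuous_map_preimage[OF continuous_map_coordinate_c0, of "ball _ d" n]
    by (simp_all add: Collect_conj_eq)
  ultimately show "\<exists>U V. openin (weak_topology_on c0) U \<and> openin (weak_topology_on c0) V
                     \<and> x \<in> U \<and> y \<in> V \<and> disjnt U V"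
    using \<open>x \<in> c0\<close> \<open>y \<in> c0\<close> \<open>d > 0\<close> by (intro exI[of _ ?U] exI[of _ ?V]) auto
qed

section \<open>Bounded functionals on c0\<close>

definition c0_unit :: "nat \<Rightarrow> (nat \<Rightarrow>\<^sub>C real)" where
  "c0_unit n = Bcontfun (\<lambda>k. if k = n then 1 else 0)"

definition c0_trunc :: "nat \<Rightarrow> (nat \<Rightarrow> real) \<Rightarrow> (nat \<Rightarrow>\<^sub>C real)" where
  "c0_trunc m w = Bcontfun (\<lambda>k. if k < m then w k else 0)"

lemma apply_c0_unit: "apply_bcontfun (c0_unit n) = (\<lambda>k. if k = n then 1 else 0)"
  unfolding c0_unit_def
  by (intro apply_Bcontfun_null_seq tendsto_eventually)
     (auto simp: eventually_sequentially intro!: exI[of _ "Suc n"])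

lemma apply_c0_trunc: "apply_bcontfun (c0_trunc m w) = (\<lambda>k. if k < m then w k else 0)"
  unfolding c0_trunc_def
  by (intro apply_Bcontfun_null_seq tendsto_eventually)
     (auto simp: eventually_sequentially intro!: exI[of _ m])

lemma c0_unit_in_c0: "c0_unit n \<in> c0"
  unfolding c0_unit_def
  by (intro Bcontfun_in_c0 tendsto_eventually)
     (auto simp: eventually_sequentially intro!: exI[of _ "Suc n"])

lemma c0_trunc_in_c0: "c0_trunc m w \<in> c0"
  unfolding c0_trunc_def
  by (intro Bcontfun_in_c0 tendsto_eventually)
     (auto simp: eventually_sequentially intro!: exI[of _ m])

lemma norm_c0_trunc_le:
  assumes "\<And>k. \<bar>w k\<bar> \<le> 1"
  shows "norm (c0_trunc m w) \<le> 1"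
proof -
  have "dist (c0_trunc m w) 0 \<le> 1"
    by (rule dist_bound) (auto simp: apply_c0_trunc assms)
  then show ?thesis by (simp add: dist_norm)
qed

lemma tendsto_c0_trunc:
  assumes "x \<in> c0"
  shows "(\<lambda>m. c0_trunc m (apply_bcontfun x)) \<longlonglongrightarrow> x"
proof (rule LIMSEQ_I)
  fix r :: real assume "r > 0"
  obtain M where M: "\<And>k. k \<ge> M \<Longrightarrow> \<bar>apply_bcontfun x k\<bar> < r / 2"
    using LIMSEQ_D[of "apply_bcontfun x" 0 "r / 2"] assms \<open>r > 0\<close> by (auto simp: c0_def)
  have "dist (c0_trunc m (apply_bcontfun x)) x \<le> r / 2" if "m \<ge> M" for m
    using M that \<open>r > 0\<close> by (intro dist_bound) (auto simp: apply_c0_trunc dist_real_def less_imp_le)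
  then have "norm (c0_trunc m (apply_bcontfun x) - x) < r" if "m \<ge> M" for m
    using that \<open>r > 0\<close> by (fastforce simp: dist_norm)
  then show "\<exists>M. \<forall>m\<ge>M. norm (c0_trunc m (apply_bcontfun x) - x) < r" by blast
qed

lemma dual_on_bound_pos:
  assumes "f \<in> dual_on M"
  obtains C where "C > 0" "\<And>x. x \<in> M \<Longrightarrow> \<bar>f x\<bar> \<le> C * norm x"
proof -
  obtain C where C: "\<And>x. x \<in> M \<Longrightarrow> \<bar>f x\<bar> \<le> C * norm x"
    using assms unfolding dual_on_def by blast
  have "\<bar>f x\<bar> \<le> (max C 0 + 1) * norm x" if "x \<in> M" for x
    using C[OF that] mult_right_mono[of C "max C 0 + 1" "norm x"] norm_ge_zero[of x] by linarith
  then show ?thesis by (intro that[of "max C 0 + 1"]) auto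
qed

lemma dual_on_c0_diff:
  assumes "f \<in> dual_on c0" "x \<in> c0" "y \<in> c0"
  shows "f (x - y) = f x - f y"
proof -
  have "f ((x - y) + y) = f (x - y) + f y"
    using assms c0_diff[OF assms(2,3)] unfolding dual_on_def by blast
  then show ?thesis by simp
qed

lemma dual_on_c0_trunc:
  assumes "f \<in> dual_on c0"
  shows "f (c0_trunc m w) = (\<Sum>n<m. w n * f (c0_unit n))"
proof (induction m)
  case 0
  have "c0_trunc 0 w = 0 *\<^sub>R 0" by (rule bcontfun_eqI) (simp add: apply_c0_trunc)
  moreover have "f (0 *\<^sub>R 0) = 0 * f 0"
    using assms zero_in_c0 unfolding dual_on_def by blast
  ultimately show ?case by simp
next
  case (Suc m)
  have "c0_trunc (Suc m) w = c0_trunc m w + w m *\<^sub>R c0_unit m"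
    by (rule bcontfun_eqI) (auto simp: apply_c0_trunc apply_c0_unit less_Suc_eq)
  then show ?case
    using Suc assms c0_trunc_in_c0 c0_unit_in_c0 c0_scaleR by (simp add: dual_on_def)
qed

lemma summable_dual_on_c0_unit:
  assumes "f \<in> dual_on c0"
  shows "summable (\<lambda>n. \<bar>f (c0_unit n)\<bar>)"
proof -
  obtain C where "C > 0" and C: "\<And>x. x \<in> c0 \<Longrightarrow> \<bar>f x\<bar> \<le> C * norm x"
    using dual_on_bound_pos[OF assms] by blast
  show ?thesis
  proof (rule summableI_nonneg_bounded)
    fix m
    let ?s = "\<lambda>n. sgn (f (c0_unit n))"
    have "(\<Sum>n<m. \<bar>f (c0_unit n)\<bar>) = f (c0_trunc m ?s)"
      by (simp add: dual_on_c0_trunc[OF assms] abs_sgn mult.commute)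
    also have "\<dots> \<le> C * norm (c0_trunc m ?s)"
      using C[OF c0_trunc_in_c0] by (meson abs_ge_self order_trans)
    also have "\<dots> \<le> C"
      using \<open>C > 0\<close> norm_c0_trunc_le[of ?s m]
      by (simp add: abs_sgn_eq mult_le_cancel_left1)
    finally show "(\<Sum>n<m. \<bar>f (c0_unit n)\<bar>) \<le> C" .
  qed simp
qed

lemma dual_on_c0_sums:
  assumes f: "f \<in> dual_on c0" and x: "x \<in> c0"
  shows "(\<lambda>n. f (c0_unit n) * apply_bcontfun x n) sums f x"
proof -
  obtain C where C: "\<And>x. x \<in> c0 \<Longrightarrow> \<bar>f x\<bar> \<le> C * norm x"
    using dual_on_bound_pos[OF f] by blast
  have bound: "norm (f (c0_trunc m (apply_bcontfun x)) - f x) \<le> C * norm (c0_trunc m (apply_bcontfun x) - x)"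
    for m
    using C[OF c0_diff[OF c0_trunc_in_c0 x]] dual_on_c0_diff[OF f c0_trunc_in_c0 x] by simp
  have "(\<lambda>m. C * norm (c0_trunc m (apply_bcontfun x) - x)) \<longlonglongrightarrow> 0"
    by (rule tendsto_mult_right_zero, rule tendsto_norm_zero, rule LIM_zero, rule tendsto_c0_trunc[OF x])
  then have "(\<lambda>m. f (c0_trunc m (apply_bcontfun x)) - f x) \<longlonglongrightarrow> 0"
    by (rule Lim_null_comparison[rotated]) (use bound in \<open>simp add: always_eventually\<close>)
  then show ?thesis
    by (simp add: sums_def dual_on_c0_trunc[OF f] mult.commute LIM_zero_iff)
qed

section \<open>Uniform boundedness\<close>

lemma norm_blinfun_le_of_bounded_on_ball:
  fixes h :: "'a::real_normed_vector \<Rightarrow>\<^sub>L 'b::real_normed_vector"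
  assumes "\<rho> > 0" and bounded: "\<And>x. x \<in> ball x\<^sub>0 \<rho> \<Longrightarrow> norm (h x) \<le> k"
  shows "norm h \<le> 4 * k / \<rho>"
proof (rule norm_blinfun_bound)
  have "0 \<le> k"
    using bounded[of x\<^sub>0] \<open>\<rho> > 0\<close> by (meson centre_in_ball norm_ge_zero order_trans)
  then show "0 \<le> 4 * k / \<rho>"
    using \<open>\<rho> > 0\<close> by simp
  fix u :: 'a
  show "norm (h u) \<le> 4 * k / \<rho> * norm u"
  proof (cases "u = 0")
    case False
    define v where "v = (\<rho> / 2 / norm u) *\<^sub>R u"
    have "norm v = \<rho> / 2" using False \<open>\<rho> > 0\<close> by (simp add: v_def)
    then have "norm (h (x\<^sub>0 + v)) \<le> k" "norm (h x\<^sub>0) \<le> k"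
      using \<open>\<rho> > 0\<close> by (auto intro!: bounded simp: dist_norm)
    moreover have "h v = h (x\<^sub>0 + v) - h x\<^sub>0"
      by (simp add: blinfun.add_right)
    ultimately have "norm (h v) \<le> 2 * k"
      using norm_triangle_ineq4[of "h (x\<^sub>0 + v)" "h x\<^sub>0"] by simp
    moreover have "h v = (\<rho> / 2 / norm u) *\<^sub>R h u"
      by (simp add: v_def blinfun.scaleR_right)
    ultimately have "\<rho> / 2 / norm u * norm (h u) \<le> 2 * k"
      using \<open>\<rho> > 0\<close> by simp
    then show ?thesis
      using False \<open>\<rho> > 0\<close> by (simp add: field_simps)
  qed simp
qed

lemma uniform_boundedness:
  fixes z :: "'i \<Rightarrow> 'a::banach \<Rightarrow>\<^sub>L 'b::real_normed_vector"
  assumes "\<And>x. bounded (range (\<lambda>i. z i x))"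
  shows "bounded (range z)"
proof -
  define T where "T k = (\<Inter>i. {x. norm (z i x) \<le> real k})" for k :: nat
  have "closed (T k)" for k
    unfolding T_def by (intro closed_INT ballI closed_Collect_le continuous_intros)
  moreover have "\<Union>(range T) = UNIV"
  proof -
    have "x \<in> \<Union>(range T)" for x
    proof -
      obtain B where B: "\<And>i. norm (z i x) \<le> B"
        using assms[of x] by (auto simp: bounded_iff)
      obtain k :: nat where "B \<le> real k" using real_arch_simple by blast
      then have "x \<in> T k" using B by (auto simp: T_def intro: order_trans)
      then show ?thesis by blast
    qed
    then show ?thesis by blast
  qed
  ultimately obtain k where "interior (T k) \<noteq> {}"
    using Baire_category_alt[of euclidean "range T"]
    by (auto simp: completely_metrizable_space_euclidean)
  then obtain x\<^sub>0 \<rho> where "\<rho> > 0" and ball: "ball x\<^sub>0 \<rho> \<subseteq> T k"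
    by (meson ex_in_conv mem_interior)
  then have "norm (z i) \<le> 4 * real k / \<rho>" for i
    by (intro norm_blinfun_le_of_bounded_on_ball) (auto simp: T_def)
  then show ?thesis by (auto simp: bounded_iff)
qed

lemma bounded_range_if_weak_star_null:
  fixes z :: "nat \<Rightarrow> 'a::banach \<Rightarrow>\<^sub>L real"
  assumes "weak_star_null z"
  shows "bounded (range z)"
  using assms by (intro uniform_boundedness) (auto simp: weak_star_null_def intro: convergent_imp_bounded)

section \<open>Helly's lemma\<close>

lemma sum_square_perturbation_bound:
  fixes a b :: "'i \<Rightarrow> real"
  assumes "0 < t" and "(\<Sum>i\<in>I. (a i)\<^sup>2) < (\<Sum>i\<in>I. (t * b i - a i)\<^sup>2) + t\<^sup>2"
  shows "(\<Sum>i\<in>I. a i * b i) < t * (1 + (\<Sum>i\<in>I. (b i)\<^sup>2)) / 2"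
proof -
  have "(\<Sum>i\<in>I. (t * b i - a i)\<^sup>2)
      = (\<Sum>i\<in>I. (a i)\<^sup>2) - 2 * t * (\<Sum>i\<in>I. a i * b i) + t\<^sup>2 * (\<Sum>i\<in>I. (b i)\<^sup>2)"
    by (simp add: power2_eq_square algebra_simps sum.distrib sum_subtractf sum_distrib_left)
  then have "t * (2 * (\<Sum>i\<in>I. a i * b i)) < t * (t * (1 + (\<Sum>i\<in>I. (b i)\<^sup>2)))"
    using assms(2) by (simp add: power2_eq_square algebra_simps)
  then show ?thesis
    using assms(1) by (simp only: mult_less_cancel_left_pos)
qed

lemma norm_blinfun_le_of_le_on_ball:
  fixes h :: "'a::real_normed_vector \<Rightarrow>\<^sub>L real"
  assumes le: "\<And>x. norm x \<le> 1 \<Longrightarrow> h x \<le> B"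
  shows "norm h \<le> B"
proof (rule norm_blinfun_bound)
  show "0 \<le> B" using le[of 0] by simp
  fix u :: 'a
  show "norm (h u) \<le> B * norm u"
  proof (cases "u = 0")
    case False
    define w where "w = (1 / norm u) *\<^sub>R u"
    have "norm w \<le> 1" "norm (- w) \<le> 1" using False by (auto simp: w_def)
    then have "h w \<le> B" "- h w \<le> B" using le by (auto simp: blinfun.minus_right[symmetric])
    then have "\<bar>h w\<bar> \<le> B" by simp
    moreover have "h w = h u / norm u" by (simp add: w_def blinfun.scaleR_right)
    ultimately show ?thesis using False by (simp add: field_simps)
  qed simp
qed

(* Since x0 minimizes d up to t^2 on the unit ball, d cannot drop by more than t^2 from x0 to
   x0 + t (x - x0); expanding d there to first order in t bounds the functional sum_i a_i g_i. *)

lemma near_minimizer_functional_bound: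
  fixes g :: "'i \<Rightarrow> 'a::real_normed_vector \<Rightarrow>\<^sub>L real"
    and I :: "'i set" and c :: "'i \<Rightarrow> real" and x\<^sub>0 :: 'a and t :: real
  defines "d \<equiv> \<lambda>x. \<Sum>i\<in>I. (g i x - c i)\<^sup>2"
    and "a \<equiv> \<lambda>i. c i - g i x\<^sub>0"
    and "K \<equiv> (1 + (\<Sum>i\<in>I. (2 * norm (g i))\<^sup>2)) / 2"
  assumes x\<^sub>0: "norm x\<^sub>0 \<le> 1"
    and near: "\<And>x. norm x \<le> 1 \<Longrightarrow> d x\<^sub>0 < d x + t\<^sup>2"
    and t: "0 < t" "t \<le> 1"
  shows "norm (\<Sum>i\<in>I. a i *\<^sub>R g i) \<le> (\<Sum>i\<in>I. a i * g i x\<^sub>0) + t * K"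
proof (rule norm_blinfun_le_of_le_on_ball)
  fix x :: 'a assume x: "norm x \<le> 1"
  define b where "b i = g i (x - x\<^sub>0)" for i
  define xt where "xt = (1 - t) *\<^sub>R x\<^sub>0 + t *\<^sub>R x"
  have "norm xt \<le> (1 - t) * norm x\<^sub>0 + t * norm x"
    unfolding xt_def using t norm_triangle_le[of "(1 - t) *\<^sub>R x\<^sub>0" "t *\<^sub>R x"] by simp
  also have "\<dots> \<le> 1"
    using t x x\<^sub>0 convex_bound_le[of "norm x\<^sub>0" 1 "norm x" "1 - t" t] by simp
  finally have "d x\<^sub>0 < d xt + t\<^sup>2" by (rule near)
  moreover have "d x\<^sub>0 = (\<Sum>i\<in>I. (a i)\<^sup>2)"
    unfolding d_def a_def by (intro sum.cong) (auto simp: power2_eq_square algebra_simps)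
  moreover have "d xt = (\<Sum>i\<in>I. (t * b i - a i)\<^sup>2)"
    unfolding d_def a_def b_def xt_def
    by (intro sum.cong refl arg_cong[where f = "\<lambda>v. v\<^sup>2"])
       (simp add: blinfun.add_right blinfun.scaleR_right blinfun.diff_right algebra_simps)
  ultimately have ab: "(\<Sum>i\<in>I. a i * b i) < t * (1 + (\<Sum>i\<in>I. (b i)\<^sup>2)) / 2"
    using t by (intro sum_square_perturbation_bound) auto
  have "\<bar>b i\<bar> \<le> 2 * norm (g i)" for i
  proof -
    have "\<bar>b i\<bar> \<le> norm (g i) * norm (x - x\<^sub>0)"
      unfolding b_def using norm_blinfun[of "g i" "x - x\<^sub>0"] by simp
    also have "\<dots> \<le> norm (g i) * 2"
      using x x\<^sub>0 norm_triangle_ineq4[of x x\<^sub>0] by (intro mult_left_mono) auto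
    finally show ?thesis by simp
  qed
  then have "(\<Sum>i\<in>I. (b i)\<^sup>2) \<le> (\<Sum>i\<in>I. (2 * norm (g i))\<^sup>2)"
    by (intro sum_mono) (metis abs_ge_zero power2_abs power_mono)
  then have "t * (1 + (\<Sum>i\<in>I. (b i)\<^sup>2)) / 2 \<le> t * K"
    unfolding K_def times_divide_eq_right[symmetric] using t
    by (intro mult_left_mono divide_right_mono) auto
  with ab have "(\<Sum>i\<in>I. a i * b i) < t * K" by linarith
  moreover have "(\<Sum>i\<in>I. a i * b i) = (\<Sum>i\<in>I. a i * g i x) - (\<Sum>i\<in>I. a i * g i x\<^sub>0)"
    by (simp add: b_def blinfun.diff_right right_diff_distrib sum_subtractf)
  ultimately show "(\<Sum>i\<in>I. a i *\<^sub>R g i) x \<le> (\<Sum>i\<in>I. a i * g i x\<^sub>0) + t * K"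
    by (simp add: blinfun.sum_left blinfun.scaleR_left)
qed

lemma Helly_sum_squares_le:
  fixes g :: "'i \<Rightarrow> 'a::real_normed_vector \<Rightarrow>\<^sub>L real"
    and \<psi> :: "('a \<Rightarrow>\<^sub>L real) \<Rightarrow>\<^sub>L real"
  assumes "norm \<psi> \<le> 1" "0 < t" "t \<le> 1"
  obtains x where "norm x \<le> 1"
    "(\<Sum>i\<in>I. (g i x - \<psi> (g i))\<^sup>2) \<le> t * ((1 + (\<Sum>i\<in>I. (2 * norm (g i))\<^sup>2)) / 2)"
proof -
  define d where "d x = (\<Sum>i\<in>I. (g i x - \<psi> (g i))\<^sup>2)" for x
  define K where "K = (1 + (\<Sum>i\<in>I. (2 * norm (g i))\<^sup>2)) / 2"
  have bdd: "bdd_below (d ` cball 0 1)"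
    unfolding d_def by (rule bdd_belowI[of _ 0]) (auto intro: sum_nonneg)
  obtain x\<^sub>0 where x\<^sub>0: "norm x\<^sub>0 \<le> 1" "d x\<^sub>0 < Inf (d ` cball 0 1) + t\<^sup>2"
    using cInf_lessD[of "d ` cball 0 1" "Inf (d ` cball 0 1) + t\<^sup>2"] assms(2) by force
  have near: "d x\<^sub>0 < d x + t\<^sup>2" if "norm x \<le> 1" for x
    using x\<^sub>0(2) cInf_lower[OF _ bdd, of "d x"] that by force
  define a where "a i = \<psi> (g i) - g i x\<^sub>0" for i
  have "(\<Sum>i\<in>I. a i * \<psi> (g i)) = \<psi> (\<Sum>i\<in>I. a i *\<^sub>R g i)"
    by (simp add: blinfun.sum_right blinfun.scaleR_right)
  also have "\<dots> \<le> norm \<psi> * norm (\<Sum>i\<in>I. a i *\<^sub>R g i)"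
    using norm_blinfun[of \<psi>] abs_le_D1 by fastforce
  also have "\<dots> \<le> norm (\<Sum>i\<in>I. a i *\<^sub>R g i)"
    using assms(1) mult_right_mono[of "norm \<psi>" 1] by fastforce
  also have "\<dots> \<le> (\<Sum>i\<in>I. a i * g i x\<^sub>0) + t * K"
    using near_minimizer_functional_bound[where g = g and I = I and c = "\<lambda>i. \<psi> (g i)"
        and x\<^sub>0 = "x\<^sub>0" and t = t] x\<^sub>0(1) near assms(2,3)
    unfolding d_def a_def K_def by blast
  finally have "(\<Sum>i\<in>I. a i * \<psi> (g i)) - (\<Sum>i\<in>I. a i * g i x\<^sub>0) \<le> t * K"
    by simp
  moreover have "d x\<^sub>0 = (\<Sum>i\<in>I. a i * \<psi> (g i)) - (\<Sum>i\<in>I. a i * g i x\<^sub>0)"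
    unfolding d_def a_def sum_subtractf[symmetric]
    by (intro sum.cong) (auto simp: power2_eq_square algebra_simps)
  ultimately show ?thesis
    using that[OF x\<^sub>0(1)] unfolding d_def K_def by simp
qed

lemma Helly_lemma:
  fixes g :: "'i \<Rightarrow> 'a::real_normed_vector \<Rightarrow>\<^sub>L real"
    and \<psi> :: "('a \<Rightarrow>\<^sub>L real) \<Rightarrow>\<^sub>L real"
  assumes "finite I" "norm \<psi> \<le> 1" "\<epsilon> > 0"
  obtains x where "norm x \<le> 1" "\<And>i. i \<in> I \<Longrightarrow> \<bar>g i x - \<psi> (g i)\<bar> < \<epsilon>"
proof -
  define K where "K = (1 + (\<Sum>i\<in>I. (2 * norm (g i))\<^sup>2)) / 2"
  define t where "t = min 1 (\<epsilon>\<^sup>2 / (2 * K))"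
  have "K > 0" unfolding K_def by (simp add: add_pos_nonneg sum_nonneg)
  then have "0 < t" "t \<le> 1" using \<open>\<epsilon> > 0\<close> by (auto simp: t_def)
  have "t \<le> \<epsilon>\<^sup>2 / (2 * K)" by (simp add: t_def)
  then have "t * K \<le> \<epsilon>\<^sup>2 / 2" using \<open>K > 0\<close> by (simp add: field_simps)
  moreover have "\<epsilon>\<^sup>2 > 0" using \<open>\<epsilon> > 0\<close> by simp
  ultimately have tK: "t * K < \<epsilon>\<^sup>2" by linarith
  obtain x where x: "norm x \<le> 1" and "(\<Sum>i\<in>I. (g i x - \<psi> (g i))\<^sup>2) \<le> t * K"
    using Helly_sum_squares_le[OF assms(2) \<open>0 < t\<close> \<open>t \<le> 1\<close>] unfolding K_def by blast
  then have "(g i x - \<psi> (g i))\<^sup>2 < \<epsilon>\<^sup>2" if "i \<in> I" for i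
    using member_le_sum[OF that _ assms(1), of "\<lambda>i. (g i x - \<psi> (g i))\<^sup>2"] tK by simp
  then have "\<bar>g i x - \<psi> (g i)\<bar> < \<epsilon>" if "i \<in> I" for i
    using that \<open>\<epsilon> > 0\<close> by (simp add: power2_less_imp_less)
  then show ?thesis using that[OF x] by blast
qed

lemma Helly_sequence:
  fixes g :: "nat \<Rightarrow> 'a::real_normed_vector \<Rightarrow>\<^sub>L real"
    and \<psi> :: "('a \<Rightarrow>\<^sub>L real) \<Rightarrow>\<^sub>L real"
  assumes "norm \<psi> \<le> 1"
  obtains xs where "\<And>N. norm (xs N) \<le> 1" "\<And>n. (\<lambda>N. g n (xs N)) \<longlonglongrightarrow> \<psi> (g n)"
proof -
  have "\<exists>x. norm x \<le> 1 \<and> (\<forall>n<N. \<bar>g n x - \<psi> (g n)\<bar> < inverse (real (Suc N)))" for N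
  proof -
    obtain x where "norm x \<le> 1" "\<And>n. n \<in> {..<N} \<Longrightarrow> \<bar>g n x - \<psi> (g n)\<bar> < inverse (real (Suc N))"
      using Helly_lemma[where I = "{..<N}" and \<psi> = \<psi> and \<epsilon> = "inverse (real (Suc N))" and g = g]
        assms by auto
    then show ?thesis by auto
  qed
  then obtain xs where xs: "\<And>N. norm (xs N) \<le> 1"
      "\<And>N n. n < N \<Longrightarrow> \<bar>g n (xs N) - \<psi> (g n)\<bar> < inverse (real (Suc N))"
    by metis
  have "(\<lambda>N. g n (xs N)) \<longlonglongrightarrow> \<psi> (g n)" for n
  proof -
    have "\<forall>\<^sub>F N in sequentially. norm (g n (xs N) - \<psi> (g n)) \<le> inverse (real (Suc N))"
      using xs(2) by (auto simp: eventually_sequentially intro!: exI[of _ "Suc n"] less_imp_le)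
    then have "(\<lambda>N. g n (xs N) - \<psi> (g n)) \<longlonglongrightarrow> 0"
      using LIMSEQ_inverse_real_of_nat by (rule Lim_null_comparison)
    then show ?thesis by (simp add: LIM_zero_iff)
  qed
  then show ?thesis using that xs(1) by blast
qed

section \<open>Weak compactness of operators into c0\<close>

lemma compactin_cluster_point:
  fixes y :: "nat \<Rightarrow> 'a"
  assumes "compactin X K" "range y \<subseteq> K"
  obtains c where "c \<in> K" "\<And>m. c \<in> X closure_of (y ` {m..})"
proof -
  define C where "C m = X closure_of (y ` {m..})" for m
  have y: "y ` {m..} \<subseteq> topspace X" for m
    using assms compactin_subset_topspace by blast
  have "K \<inter> \<Inter>\<F> \<noteq> {}" if \<F>: "finite \<F>" "\<F> \<subseteq> range C" for \<F>
  proof -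
    obtain M where M: "finite M" "\<F> = C ` M"
      using finite_subset_image[OF \<F>] by blast
    have "y (Max (insert 0 M)) \<in> C m" if "m \<in> M" for m
      using that M(1) closure_of_subset[OF y[of m]] by (auto simp: C_def)
    then show ?thesis
      using assms(2) M(2) by blast
  qed
  then have "K \<inter> \<Inter>(range C) \<noteq> {}"
    using assms(1) unfolding compactin_fip by (auto simp: C_def)
  then show ?thesis using that by (auto simp: C_def)
qed

lemma cluster_point_continuous_map_limit:
  fixes y :: "nat \<Rightarrow> 'a"
  assumes c: "\<And>m. c \<in> X closure_of (y ` {m..})"
    and f: "continuous_map X euclideanreal f"
    and lim: "(\<lambda>n. f (y n)) \<longlonglongrightarrow> L"
  shows "f c = L"
proof (rule ccontr)
  assume "f c \<noteq> L"
  define e where "e = \<bar>f c - L\<bar> / 2"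
  have "e > 0" using \<open>f c \<noteq> L\<close> by (simp add: e_def)
  then obtain m where m: "\<And>n. n \<ge> m \<Longrightarrow> \<bar>f (y n) - L\<bar> < e"
    using LIMSEQ_D[OF lim] by (metis real_norm_def)
  define U where "U = {x \<in> topspace X. f x \<in> ball (f c) e}"
  have "openin X U"
    unfolding U_def using f by (intro openin_continuous_map_preimage) auto
  moreover have "c \<in> U"
    using c[of 0] \<open>e > 0\<close> by (simp add: U_def in_closure_of)
  ultimately obtain u where "u \<in> y ` {m..}" "u \<in> U"
    using c[of m] unfolding in_closure_of by metis
  then obtain n where "n \<ge> m" "dist (f c) (f (y n)) < e"
    unfolding U_def by auto
  then have "\<bar>f c - f (y n)\<bar> < e" "\<bar>f (y n) - L\<bar> < e"
    using m by (auto simp: dist_real_def)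
  then show False
    using abs_triangle_ineq[of "f c - f (y n)" "f (y n) - L"] unfolding e_def by simp
qed

lemma compactin_closure_of_subset_compactin:
  assumes "Hausdorff_space X" "compactin X K" "S \<subseteq> K"
  shows "compactin X (X closure_of S)"
  using assms by (meson closed_compactin closedin_closure_of closure_of_minimal compactin_imp_closedin)

lemma closedin_linear_functionals:
  "closedin (product_topology (\<lambda>_. euclideanreal) UNIV) {\<psi> :: 'v::real_vector \<Rightarrow> real. linear \<psi>}"
proof -
  let ?P = "product_topology (\<lambda>_::'v. euclideanreal) UNIV"
  have add: "closedin ?P {\<psi> \<in> topspace ?P. \<psi> (v + w) - \<psi> v - \<psi> w \<in> {0}}" for v w
    by (intro closedin_continuous_map_preimage[where Y = euclideanreal] continuous_intros) auto
  have hom: "closedin ?P {\<psi> \<in> topspace ?P. \<psi> (a *\<^sub>R v) - a * \<psi> v \<in> {0}}" for a v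
    by (intro closedin_continuous_map_preimage[where Y = euclideanreal] continuous_intros) auto
  have "{\<psi> :: 'v \<Rightarrow> real. linear \<psi>}
      = (\<Inter>p. {\<psi> \<in> topspace ?P. \<psi> (fst p + snd p) - \<psi> (fst p) - \<psi> (snd p) \<in> {0}})
        \<inter> (\<Inter>p. {\<psi> \<in> topspace ?P. \<psi> (fst p *\<^sub>R snd p) - fst p * \<psi> (snd p) \<in> {0}})"
    by (auto simp: linear_iff diff_diff_eq)
  also have "closedin ?P \<dots>"
    using add hom by (intro closedin_Int closedin_INT) auto
  finally show ?thesis .
qed

lemma compactin_bounded_linear_functionals:
  "compactin (product_topology (\<lambda>_. euclideanreal) UNIV)
     {\<psi> :: 'v::real_normed_vector \<Rightarrow> real. linear \<psi> \<and> (\<forall>v. \<bar>\<psi> v\<bar> \<le> r * norm v)}"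
proof -
  have "{\<psi> :: 'v \<Rightarrow> real. linear \<psi> \<and> (\<forall>v. \<bar>\<psi> v\<bar> \<le> r * norm v)}
      = {\<psi>. linear \<psi>} \<inter> (\<Pi>\<^sub>E v\<in>UNIV. cball 0 (r * norm v))"
    by (auto simp: PiE_iff)
  then show ?thesis
    by (simp add: closed_Int_compactin closedin_linear_functionals compactin_PiE)
qed

lemma continuous_map_evaluations_weak_c0:
  fixes z :: "nat \<Rightarrow> 'v::banach"
  assumes "bounded (range z)"
    and D: "\<And>\<psi>. \<psi> \<in> D \<Longrightarrow> bounded_linear \<psi> \<and> (\<lambda>n. \<psi> (z n)) \<longlonglongrightarrow> 0"
  shows "continuous_map (subtopology (product_topology (\<lambda>_. euclideanreal) UNIV) D)
           (weak_topology_on c0) (\<lambda>\<psi>. Bcontfun (\<lambda>n. \<psi> (z n)))"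
proof (rule continuous_map_into_weak_topology_on)
  let ?Y = "subtopology (product_topology (\<lambda>_::'v. euclideanreal) UNIV) D"
  show "(\<lambda>\<psi>. Bcontfun (\<lambda>n. \<psi> (z n))) \<in> topspace ?Y \<rightarrow> c0"
    using D by (auto intro: Bcontfun_in_c0)
  fix f assume f: "f \<in> dual_on c0"
  obtain C where C: "\<And>n. norm (z n) \<le> C"
    using assms(1) by (auto simp: bounded_iff)
  define a where "a n = f (c0_unit n)" for n
  have summable: "summable (\<lambda>n. a n *\<^sub>R z n)"
  proof (rule summable_norm_cancel, rule summable_comparison_test'[where N = 0])
    show "summable (\<lambda>n. \<bar>a n\<bar> * C)"
      using summable_dual_on_c0_unit[OF f] unfolding a_def by (rule summable_mult2)
    show "norm (norm (a n *\<^sub>R z n)) \<le> \<bar>a n\<bar> * C" for n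
      using C[of n] by (simp add: mult_left_mono)
  qed
  have eval: "f (Bcontfun (\<lambda>n. \<psi> (z n))) = \<psi> (\<Sum>n. a n *\<^sub>R z n)" if "\<psi> \<in> D" for \<psi>
  proof -
    have bl: "bounded_linear \<psi>" and null: "(\<lambda>n. \<psi> (z n)) \<longlonglongrightarrow> 0"
      using D[OF that] by auto
    have "(\<lambda>n. a n * \<psi> (z n)) sums f (Bcontfun (\<lambda>n. \<psi> (z n)))"
      using dual_on_c0_sums[OF f Bcontfun_in_c0[OF null]]
      by (simp add: a_def apply_Bcontfun_null_seq[OF null])
    moreover have "(\<lambda>n. \<psi> (a n *\<^sub>R z n)) sums \<psi> (\<Sum>n. a n *\<^sub>R z n)"
      using bounded_linear.sums[OF bl summable_sums[OF summable]] .
    ultimately show ?thesis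
      using bl by (simp add: linear_scale[OF bounded_linear.linear] sums_unique2)
  qed
  have "continuous_map ?Y euclideanreal (\<lambda>\<psi>. \<psi> (\<Sum>n. a n *\<^sub>R z n))"
    by (intro continuous_map_from_subtopology continuous_map_product_projection) simp
  then show "continuous_map ?Y euclideanreal (f \<circ> (\<lambda>\<psi>. Bcontfun (\<lambda>n. \<psi> (z n))))"
    by (rule continuous_map_eq) (simp add: eval)
qed

lemma rel_weakly_compact_seq_op_if_weakly_null_dual:
  fixes z :: "nat \<Rightarrow> 'a::banach \<Rightarrow>\<^sub>L real"
  assumes z: "weak_star_null z" and null: "weakly_null_dual z" and "bounded A"
  shows "rel_weakly_compact c0 (seq_op z ` A)"
proof -
  let ?P = "product_topology (\<lambda>_::'a \<Rightarrow>\<^sub>L real. euclideanreal) UNIV"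
  let ?W = "weak_topology_on c0"
  obtain r where r: "\<And>x. x \<in> A \<Longrightarrow> norm x \<le> r"
    using \<open>bounded A\<close> by (auto simp: bounded_iff)
  define D where "D = {\<psi> :: ('a \<Rightarrow>\<^sub>L real) \<Rightarrow> real. linear \<psi> \<and> (\<forall>g. \<bar>\<psi> g\<bar> \<le> r * norm g)}"
  define \<Psi> where "\<Psi> \<psi> = Bcontfun (\<lambda>n. \<psi> (z n))" for \<psi> :: "('a \<Rightarrow>\<^sub>L real) \<Rightarrow> real"
  have "bounded (range z)"
    using z by (rule bounded_range_if_weak_star_null)
  moreover have "bounded_linear \<psi> \<and> (\<lambda>n. \<psi> (z n)) \<longlonglongrightarrow> 0" if "\<psi> \<in> D" for \<psi>
  proof -
    have "bounded_linear \<psi>"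
      using that unfolding D_def
      by (intro bounded_linear_intro[where K = r]) (auto simp: linear_iff mult.commute)
    then show ?thesis
      using null unfolding weakly_null_dual_def
      by (metis bounded_linear_Blinfun_apply)
  qed
  ultimately have "continuous_map (subtopology ?P D) ?W \<Psi>"
    unfolding \<Psi>_def by (rule continuous_map_evaluations_weak_c0)
  then have "compactin ?W (\<Psi> ` D)"
    using compactin_bounded_linear_functionals[of r]
    by (intro image_compactin) (auto simp: compactin_subtopology D_def)
  moreover have "seq_op z ` A \<subseteq> \<Psi> ` D"
  proof
    fix y assume "y \<in> seq_op z ` A"
    then obtain x where "x \<in> A" "y = \<Psi> (\<lambda>g. g x)"
      by (auto simp: seq_op_def \<Psi>_def)
    moreover have "\<bar>g x\<bar> \<le> r * norm g" for g :: "'a \<Rightarrow>\<^sub>L real"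
      using norm_blinfun[of g x] r[OF \<open>x \<in> A\<close>] mult_left_mono[of "norm x" r "norm g"]
      by (simp add: mult.commute)
    then have "(\<lambda>g. blinfun_apply g x) \<in> D"
      by (simp add: D_def linear_iff blinfun.add_left blinfun.scaleR_left)
    ultimately show "y \<in> \<Psi> ` D" by blast
  qed
  ultimately show ?thesis
    unfolding rel_weakly_compact_def
    by (rule compactin_closure_of_subset_compactin[OF Hausdorff_space_weak_topology_c0])
qed

lemma weakly_null_dual_if_rel_weakly_compact_seq_op:
  fixes z :: "nat \<Rightarrow> 'a::real_normed_vector \<Rightarrow>\<^sub>L real"
  assumes z: "weak_star_null z" and rwc: "rel_weakly_compact c0 (seq_op z ` cball 0 1)"
  shows "weakly_null_dual z"
  unfolding weakly_null_dual_def
proof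
  fix \<psi> :: "('a \<Rightarrow>\<^sub>L real) \<Rightarrow>\<^sub>L real"
  let ?W = "weak_topology_on c0"
  let ?K = "?W closure_of (seq_op z ` cball 0 1)"
  define \<phi> where "\<phi> = (1 / (norm \<psi> + 1)) *\<^sub>R \<psi>"
  have "norm \<psi> + 1 > 0"
    by (simp add: add_nonneg_pos)
  then have "norm \<phi> \<le> 1"
    by (simp add: \<phi>_def divide_le_eq_1)
  obtain xs where xs: "\<And>N. norm (xs N) \<le> 1" "\<And>n. (\<lambda>N. z n (xs N)) \<longlonglongrightarrow> \<phi> (z n)"
    using Helly_sequence[OF \<open>norm \<phi> \<le> 1\<close>] by blast
  have "seq_op z ` cball 0 1 \<subseteq> ?K"
    by (rule closure_of_subset) (use seq_op_in_c0[OF z] in auto)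
  then have "range (seq_op z \<circ> xs) \<subseteq> ?K"
    using xs(1) by auto
  then obtain c where c: "c \<in> ?K" "\<And>m. c \<in> ?W closure_of ((seq_op z \<circ> xs) ` {m..})"
    using compactin_cluster_point[OF rwc[unfolded rel_weakly_compact_def]] by blast
  have "apply_bcontfun c n = \<phi> (z n)" for n
    by (rule cluster_point_continuous_map_limit[OF c(2) continuous_map_coordinate_c0])
       (simp add: apply_seq_op[OF z] xs(2))
  then have "apply_bcontfun c = (\<lambda>n. \<phi> (z n))" ..
  moreover have "c \<in> c0"
    using c(1) closure_of_subset_topspace by fastforce
  ultimately have "(\<lambda>n. \<phi> (z n)) \<longlonglongrightarrow> 0"
    by (simp add: c0_def)
  then have "(\<lambda>n. (norm \<psi> + 1) * \<phi> (z n)) \<longlonglongrightarrow> 0"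
    by (rule tendsto_mult_right_zero)
  then show "(\<lambda>n. \<psi> (z n)) \<longlonglongrightarrow> 0"
    using \<open>norm \<psi> + 1 > 0\<close> by (simp add: \<phi>_def blinfun.scaleR_left)
qed

lemma weakly_null_dual_iff_rel_weakly_compact_seq_op:
  fixes z :: "nat \<Rightarrow> 'a::banach \<Rightarrow>\<^sub>L real"
  assumes "weak_star_null z"
  shows "weakly_null_dual z \<longleftrightarrow> rel_weakly_compact c0 (seq_op z ` cball 0 1)"
    and "weakly_null_dual z \<longleftrightarrow> (\<forall>A. bounded A \<longrightarrow> rel_weakly_compact c0 (seq_op z ` A))"
  using assms rel_weakly_compact_seq_op_if_weakly_null_dual
    weakly_null_dual_if_rel_weakly_compact_seq_op bounded_cball by blast+

theorem mainTheorem3: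
  fixes T :: "'a::banach \<Rightarrow>\<^sub>L 'b::banach_lattice"
  shows "(almost_grothendieck_op T
            \<longleftrightarrow> (\<forall>ys. disjoint_operator_seq ys
                   \<longrightarrow> weakly_compact_op_c0 (seq_op ys \<circ> blinfun_apply T)))
       \<and> (almost_grothendieck_op T
            \<longleftrightarrow> (\<forall>A. bounded A \<longrightarrow> almost_grothendieck_set (blinfun_apply T ` A)))
       \<and> (almost_grothendieck_op T
            \<longleftrightarrow> almost_grothendieck_set (blinfun_apply T ` cball 0 1))"
proof -
  have image_seq_op: "seq_op ys ` blinfun_apply T ` A = seq_op (\<lambda>n. ys n o\<^sub>L T) ` A"
    for ys and A :: "'a set"
    by (auto simp: seq_op_def image_image)
  have "weak_star_null (\<lambda>n. ys n o\<^sub>L T)" if "disjoint_operator_seq ys" for ys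
    using that by (simp add: disjoint_operator_seq_def weak_star_null_def)
  note iff = weakly_null_dual_iff_rel_weakly_compact_seq_op[OF this]
  have "almost_grothendieck_op T
      \<longleftrightarrow> (\<forall>ys. disjoint_operator_seq ys \<longrightarrow> weakly_null_dual (\<lambda>n. ys n o\<^sub>L T))"
    by (simp add: almost_grothendieck_op_def disjoint_operator_seq_def)
  then show ?thesis
    unfolding almost_grothendieck_set_def weakly_compact_op_c0_def image_comp[symmetric]
      image_seq_op
    using iff by blast
qed

end
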